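(* Fix $k\in\mathbb{N}$ and let $Q$ be a class of graphs (closed under isomorphism) each of treewidth at most $k$. Then $P_Q$ is weakly distinguishing.
   Context: All graphs are finite and simple. For a class $Q$, $P_Q(G;X)=\sum_{A\subseteq V(G):\, G[A]\in Q}X^{|A|}$, where $G[A]$ is the induced subgraph on $A$. A graph $G$ is $P$-unique if every graph $H$ with $P(G)=P(H)$ is isomorphic to $G$. With $\mathcal{G}(n)$ the set of isomorphism classes of graphs on $n$ vertices and $U_P(n)$ the $P$-unique graphs in $\mathcal{G}(n)$, $P$ is weakly distinguishing if $\lim_{n\to\infty}|U_P(n)|/|\mathcal{G}(n)|=0$. *)

theory Defs
  imports "HOL-Computational_Algebra.Polynomial"
begin

text \<open>Finite simple graphs with vertices drawn from nat: a pair (V, E) where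
  V is a finite vertex set and E a set of 2-element subsets of V.
  Every finite simple graph is isomorphic to one of this form.\<close>

type_synonym graph = "nat set \<times> nat set set"

definition verts :: "graph \<Rightarrow> nat set" where "verts G = fst G"
definition edges :: "graph \<Rightarrow> nat set set" where "edges G = snd G"

definition is_graph :: "graph \<Rightarrow> bool" where
  "is_graph G \<longleftrightarrow> finite (verts G) \<and>
     (\<forall>e\<in>edges G. e \<subseteq> verts G \<and> card e = 2)"

definition induced :: "graph \<Rightarrow> nat set \<Rightarrow> graph" where
  "induced G A = (A, {e \<in> edges G. e \<subseteq> A})"

definition graph_iso :: "graph \<Rightarrow> graph \<Rightarrow> bool" where
  "graph_iso G H \<longleftrightarrow> (\<exists>f. bij_betw f (verts G) (verts H) \<and>
     (\<forall>u\<in>verts G. \<forall>v\<in>verts G. {u, v} \<in> edges G \<longleftrightarrow> {f u, f v} \<in> edges H))"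

definition connected_graph :: "graph \<Rightarrow> bool" where
  "connected_graph G \<longleftrightarrow>
     (\<forall>u\<in>verts G. \<forall>v\<in>verts G. (u, v) \<in> {(x, y). {x, y} \<in> edges G}\<^sup>*)"

definition is_tree :: "graph \<Rightarrow> bool" where
  "is_tree T \<longleftrightarrow> is_graph T \<and> verts T \<noteq> {} \<and> connected_graph T \<and>
     card (edges T) + 1 = card (verts T)"

definition tree_decomp_width :: "graph \<Rightarrow> graph \<Rightarrow> (nat \<Rightarrow> nat set) \<Rightarrow> nat \<Rightarrow> bool" where
  "tree_decomp_width G T B k \<longleftrightarrow> is_tree T \<and>
     (\<forall>t\<in>verts T. B t \<subseteq> verts G \<and> card (B t) \<le> k + 1) \<and>
     (\<Union>t\<in>verts T. B t) = verts G \<and>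
     (\<forall>e\<in>edges G. \<exists>t\<in>verts T. e \<subseteq> B t) \<and>
     (\<forall>v\<in>verts G. connected_graph (induced T {t \<in> verts T. v \<in> B t}))"

definition treewidth_le :: "graph \<Rightarrow> nat \<Rightarrow> bool" where
  "treewidth_le G k \<longleftrightarrow> (\<exists>T B. tree_decomp_width G T B k)"

definition iso_closed :: "graph set \<Rightarrow> bool" where
  "iso_closed Q \<longleftrightarrow> (\<forall>G H. G \<in> Q \<longrightarrow> is_graph H \<longrightarrow> graph_iso G H \<longrightarrow> H \<in> Q)"

definition P_class :: "graph set \<Rightarrow> graph \<Rightarrow> nat poly" where
  "P_class Q G = (\<Sum>A\<in>{A. A \<subseteq> verts G \<and> induced G A \<in> Q}. monom 1 (card A))"

definition P_unique :: "(graph \<Rightarrow> 'b) \<Rightarrow> graph \<Rightarrow> bool" where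
  "P_unique P G \<longleftrightarrow> (\<forall>H. is_graph H \<longrightarrow> P H = P G \<longrightarrow> graph_iso G H)"

definition graphs_on :: "nat \<Rightarrow> graph set" where
  "graphs_on n = {G. is_graph G \<and> verts G = {0..<n}}"

definition iso_rel :: "nat \<Rightarrow> (graph \<times> graph) set" where
  "iso_rel n = {(G, H). G \<in> graphs_on n \<and> H \<in> graphs_on n \<and> graph_iso G H}"

definition iso_classes :: "nat \<Rightarrow> graph set set" where
  "iso_classes n = graphs_on n // iso_rel n"

definition unique_classes :: "(graph \<Rightarrow> 'b) \<Rightarrow> nat \<Rightarrow> graph set set" where
  "unique_classes P n = {C \<in> iso_classes n. \<forall>G\<in>C. P_unique P G}"

definition weakly_distinguishing :: "(graph \<Rightarrow> 'b) \<Rightarrow> bool" where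
  "weakly_distinguishing P \<longleftrightarrow>
     (\<lambda>n. real (card (unique_classes P n)) / real (card (iso_classes n))) \<longlonglongrightarrow> 0"

end

theory Submission
  imports Defs "HOL-Combinatorics.Permutations" "HOL-Library.FuncSet" "HOL-Real_Asymp.Real_Asymp"
begin

text \<open>A graph of treewidth at most k has at most k |V| edges: delete a vertex lying in a single
  bag (its neighbours all lie in that bag, so it has degree at most k), or, if every vertex lies
  in two bags, delete a leaf of the decomposition tree, whose bag is then contained in its
  neighbour's. As treewidth does not grow under induced subgraphs, if every set of m = n div 4
  vertices of an n-vertex graph G spans more than k m edges, then P_Q(G) has degree below m and
  coefficients at most 2^n, so it takes one of at most (2^n + 1)^m values. Graphs having a sparse
  m-set are a fraction of roughly n^O(k n) / 2^(m^2/2) of all 2^(n choose 2) labelled graphs.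
  A P_Q-unique class contains such a graph or is determined by its polynomial, and there are at
  least 2^(n choose 2) / n! classes, so both kinds are negligible.\<close>

section \<open>Induced subgraphs and trees\<close>

lemma verts_induced [simp]: "verts (induced G A) = A"
  by (simp add: induced_def verts_def)

lemma edges_induced [simp]: "edges (induced G A) = {e \<in> edges G. e \<subseteq> A}"
  by (simp add: induced_def edges_def)

lemma induced_induced: "B \<subseteq> A \<Longrightarrow> induced (induced G A) B = induced G B"
  by (auto simp: induced_def edges_def)

lemma verts_edges_eq: "(verts G, edges G) = G"
  by (simp add: verts_def edges_def)

lemma finite_verts: "is_graph G \<Longrightarrow> finite (verts G)"
  by (simp add: is_graph_def)

lemma edge_subset_verts: "is_graph G \<Longrightarrow> e \<in> edges G \<Longrightarrow> e \<subseteq> verts G"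
  by (simp add: is_graph_def)

lemma card_edge: "is_graph G \<Longrightarrow> e \<in> edges G \<Longrightarrow> card e = 2"
  by (simp add: is_graph_def)

lemma edge_through_vertexE:
  assumes "is_graph G" "e \<in> edges G" "v \<in> e"
  obtains u where "u \<noteq> v" "e = {v, u}"
  using card_edge[OF assms(1,2)] assms(3) by (auto simp: card_2_iff doubleton_eq_iff)

lemma is_graph_induced: "is_graph G \<Longrightarrow> A \<subseteq> verts G \<Longrightarrow> is_graph (induced G A)"
  by (auto simp: is_graph_def intro: finite_subset)

lemma induced_verts:
  assumes "is_graph G"
  shows "induced G (verts G) = G"
proof -
  have "{e \<in> edges G. e \<subseteq> verts G} = edges G"
    using assms by (auto simp: is_graph_def)
  then show ?thesis by (simp add: induced_def verts_edges_eq)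
qed

definition two_subsets :: "nat set \<Rightarrow> nat set set" where
  "two_subsets X = {e. e \<subseteq> X \<and> card e = 2}"

lemma finite_two_subsets: "finite X \<Longrightarrow> finite (two_subsets X)"
  by (simp add: two_subsets_def)

lemma card_two_subsets: "finite X \<Longrightarrow> card (two_subsets X) = card X choose 2"
  unfolding two_subsets_def by (rule n_subsets)

lemma two_subsets_mono: "A \<subseteq> B \<Longrightarrow> two_subsets A \<subseteq> two_subsets B"
  by (auto simp: two_subsets_def)

lemma edges_subset_two_subsets: "is_graph G \<Longrightarrow> edges G \<subseteq> two_subsets (verts G)"
  by (auto simp: is_graph_def two_subsets_def)

lemma finite_edges: "is_graph G \<Longrightarrow> finite (edges G)"
  by (meson edges_subset_two_subsets finite_two_subsets finite_verts finite_subset)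

definition adj :: "graph \<Rightarrow> (nat \<times> nat) set" where
  "adj G = {(x, y). {x, y} \<in> edges G}"

lemma connected_graph_iff:
  "connected_graph G \<longleftrightarrow> (\<forall>u\<in>verts G. \<forall>v\<in>verts G. (u, v) \<in> (adj G)\<^sup>*)"
  by (simp add: connected_graph_def adj_def)

lemma connected_induced_Diff_leaf:
  assumes conn: "connected_graph (induced T S)"
    and leaf: "\<And>y. {l, y} \<in> edges T \<Longrightarrow> y = p"
  shows "connected_graph (induced T (S - {l}))"
  unfolding connected_graph_iff
proof (intro ballI)
  let ?R = "adj (induced T (S - {l}))"
  fix u v
  assume u: "u \<in> verts (induced T (S - {l}))" and v: "v \<in> verts (induced T (S - {l}))"
  \<comment> \<open>A walk in S through the leaf l enters and leaves it via p, so it can skip l.\<close>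
  have "(u, if x = l then p else x) \<in> ?R\<^sup>*" if "(u, x) \<in> (adj (induced T S))\<^sup>*" for x
    using that
  proof (induction rule: rtrancl_induct)
    case base
    then show ?case using u by simp
  next
    case (step y z)
    then have yz: "{y, z} \<in> edges T" "y \<in> S" "z \<in> S"
      by (auto simp: adj_def)
    show ?case
    proof (cases "y = l \<or> z = l")
      case True
      then have "(if z = l then p else z) = (if y = l then p else y)"
        using leaf yz(1) by (metis insert_commute)
      then show ?thesis using step.IH by simp
    next
      case False
      then have "(y, z) \<in> ?R" using yz by (auto simp: adj_def)
      then show ?thesis using step.IH False by auto
    qed
  qed
  moreover have "(u, v) \<in> (adj (induced T S))\<^sup>*"
    using conn u v by (auto simp: connected_graph_iff)
  ultimately show "(u, v) \<in> ?R\<^sup>*" using v by fastforce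
qed

lemma sum_degrees:
  assumes G: "is_graph G"
  shows "(\<Sum>v\<in>verts G. card {e \<in> edges G. v \<in> e}) = 2 * card (edges G)"
proof -
  have "(\<Sum>v\<in>verts G. card {e \<in> edges G. v \<in> e}) = (\<Sum>v\<in>verts G. \<Sum>e\<in>edges G. of_bool (v \<in> e))"
    using finite_edges[OF G] by (simp add: Int_def)
  also have "\<dots> = (\<Sum>e\<in>edges G. \<Sum>v\<in>verts G. of_bool (v \<in> e))"
    by (rule sum.swap)
  also have "\<dots> = (\<Sum>e\<in>edges G. 2)"
  proof (rule sum.cong)
    fix e assume e: "e \<in> edges G"
    then have "verts G \<inter> e = e" using edge_subset_verts[OF G] by blast
    then show "(\<Sum>v\<in>verts G. of_bool (v \<in> e)) = (2::nat)"
      using finite_verts[OF G] card_edge[OF G e] by (simp add: Int_def)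
  qed simp
  finally show ?thesis by simp
qed

lemma tree_has_leaf:
  assumes T: "is_tree T" and two: "2 \<le> card (verts T)"
  obtains l p where "l \<in> verts T" "{l, p} \<in> edges T" "\<And>y. {l, y} \<in> edges T \<Longrightarrow> y = p"
proof -
  have G: "is_graph T" using T by (simp add: is_tree_def)
  let ?deg = "\<lambda>v. card {e \<in> edges T. v \<in> e}"
  have "\<exists>l\<in>verts T. ?deg l \<le> 1"
  proof (rule ccontr)
    assume "\<not> ?thesis"
    then have "(\<Sum>v\<in>verts T. 2) \<le> (\<Sum>v\<in>verts T. ?deg v)"
      by (intro sum_mono) auto
    then show False
      using sum_degrees[OF G] T by (simp add: is_tree_def)
  qed
  then obtain l where l: "l \<in> verts T" and deg: "?deg l \<le> 1" ..
  obtain w where w: "w \<in> verts T" "w \<noteq> l"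
    using two l by (metis card_le_Suc0_iff_eq finite_verts[OF G] not_less_eq_eq numeral_2_eq_2)
  have "(l, w) \<in> (adj T)\<^sup>*"
    using T l w by (simp add: is_tree_def connected_graph_iff)
  then obtain p where lp: "{l, p} \<in> edges T"
    using w(2) by (auto simp: adj_def elim: converse_rtranclE)
  have "{e \<in> edges T. l \<in> e} = {{l, p}}"
    using deg lp finite_edges[OF G] by (auto simp: card_le_Suc0_iff_eq)
  then have "{l, y} \<in> edges T \<Longrightarrow> y = p" for y
    using card_edge[OF G] by (metis (no_types, lifting) doubleton_eq_iff mem_Collect_eq insertI1 singletonD)
  then show thesis using that l lp by blast
qed
section \<open>Graphs of bounded treewidth are sparse\<close>

lemma tree_decomp_induced:
  assumes G: "is_graph G" and d: "tree_decomp_width G T B k" and A: "A \<subseteq> verts G"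
  shows "tree_decomp_width (induced G A) T (\<lambda>t. B t \<inter> A) k"
  unfolding tree_decomp_width_def
proof (intro conjI)
  show "is_tree T"
    using d by (simp add: tree_decomp_width_def)
  show "\<forall>t\<in>verts T. B t \<inter> A \<subseteq> verts (induced G A) \<and> card (B t \<inter> A) \<le> k + 1"
  proof
    fix t assume "t \<in> verts T"
    then have "B t \<subseteq> verts G" "card (B t) \<le> k + 1"
      using d by (auto simp: tree_decomp_width_def)
    moreover have "finite (B t)"
      using \<open>B t \<subseteq> verts G\<close> finite_verts[OF G] by (rule finite_subset)
    ultimately show "B t \<inter> A \<subseteq> verts (induced G A) \<and> card (B t \<inter> A) \<le> k + 1"
      using card_mono[of "B t" "B t \<inter> A"] by auto
  qed
  show "(\<Union>t\<in>verts T. B t \<inter> A) = verts (induced G A)"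
    using d A by (auto simp: tree_decomp_width_def)
  show "\<forall>e\<in>edges (induced G A). \<exists>t\<in>verts T. e \<subseteq> B t \<inter> A"
    using d by (fastforce simp: tree_decomp_width_def)
  have "{t \<in> verts T. v \<in> B t \<inter> A} = {t \<in> verts T. v \<in> B t}" if "v \<in> A" for v
    using that by blast
  then show "\<forall>v\<in>verts (induced G A). connected_graph (induced T {t \<in> verts T. v \<in> B t \<inter> A})"
    using d A by (auto simp: tree_decomp_width_def)
qed

lemma treewidth_le_induced:
  "is_graph G \<Longrightarrow> treewidth_le G k \<Longrightarrow> A \<subseteq> verts G \<Longrightarrow> treewidth_le (induced G A) k"
  unfolding treewidth_le_def using tree_decomp_induced by blast

lemma card_edges_le_delete_vertex:
  assumes G: "is_graph G" and d: "tree_decomp_width G T B k"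
    and t: "t \<in> verts T" "v \<in> B t" and only: "\<forall>s\<in>verts T. v \<in> B s \<longrightarrow> s = t"
  shows "card (edges G) \<le> card (edges (induced G (verts G - {v}))) + k"
proof -
  have bag: "B t \<subseteq> verts G" "card (B t) \<le> k + 1"
    using d t by (auto simp: tree_decomp_width_def)
  have fin: "finite (B t)"
    using bag finite_verts[OF G] finite_subset by blast
  have "{e \<in> edges G. v \<in> e} \<subseteq> (\<lambda>u. {v, u}) ` (B t - {v})"
  proof
    fix e assume e: "e \<in> {e \<in> edges G. v \<in> e}"
    then obtain s where "s \<in> verts T" "e \<subseteq> B s"
      using d by (auto simp: tree_decomp_width_def)
    with e only have "e \<subseteq> B t" by auto
    moreover obtain u where "u \<noteq> v" "e = {v, u}"
      using e by (auto elim: edge_through_vertexE[OF G])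
    ultimately show "e \<in> (\<lambda>u. {v, u}) ` (B t - {v})" by auto
  qed
  then have "card {e \<in> edges G. v \<in> e} \<le> card (B t - {v})"
    using fin by (meson card_image_le card_mono finite_Diff finite_imageI le_trans)
  also have "\<dots> \<le> k"
    using bag t fin by simp
  finally have incident: "card {e \<in> edges G. v \<in> e} \<le> k" .
  have "edges G \<subseteq> edges (induced G (verts G - {v})) \<union> {e \<in> edges G. v \<in> e}"
    using edge_subset_verts[OF G] by auto
  then have "card (edges G) \<le> card (edges (induced G (verts G - {v})) \<union> {e \<in> edges G. v \<in> e})"
    using finite_edges[OF G] by (simp add: card_mono)
  also have "\<dots> \<le> card (edges (induced G (verts G - {v}))) + card {e \<in> edges G. v \<in> e}"
    by (rule card_Un_le)
  finally show ?thesis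
    using incident by linarith
qed

lemma edges_remove_leaf:
  assumes T: "is_graph T" and lp: "{l, p} \<in> edges T"
    and leaf: "\<And>y. {l, y} \<in> edges T \<Longrightarrow> y = p"
  shows "edges (induced T (verts T - {l})) = edges T - {{l, p}}"
proof -
  have "e \<subseteq> verts T - {l} \<longleftrightarrow> e \<noteq> {l, p}" if e: "e \<in> edges T" for e
  proof -
    have "l \<notin> e" if "e \<noteq> {l, p}"
      using e that leaf by (metis edge_through_vertexE[OF T])
    then show ?thesis
      using edge_subset_verts[OF T e] by auto
  qed
  then show ?thesis by auto
qed

lemma is_tree_remove_leaf:
  assumes T: "is_tree T" and lp: "{l, p} \<in> edges T"
    and leaf: "\<And>y. {l, y} \<in> edges T \<Longrightarrow> y = p"
  shows "is_tree (induced T (verts T - {l}))"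
proof -
  have G: "is_graph T" using T by (simp add: is_tree_def)
  have l: "l \<in> verts T" and p: "p \<in> verts T - {l}"
    using edge_subset_verts[OF G lp] card_edge[OF G lp] by auto
  have "connected_graph (induced T (verts T))"
    using T induced_verts[OF G] by (simp add: is_tree_def)
  then have "connected_graph (induced T (verts T - {l}))"
    using leaf by (rule connected_induced_Diff_leaf)
  moreover have "card (edges T - {{l, p}}) + 1 = card (verts T - {l})"
  proof -
    have "card (edges T) > 0"
      using lp finite_edges[OF G] by (auto simp: card_gt_0_iff)
    moreover have "card (edges T) + 1 = card (verts T)"
      using T by (simp add: is_tree_def)
    ultimately show ?thesis
      using l lp finite_verts[OF G] finite_edges[OF G] by simp
  qed
  ultimately show ?thesis
    using is_graph_induced[OF G] p edges_remove_leaf[OF G lp leaf] by (auto simp: is_tree_def)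
qed

lemma tree_decomp_remove_leaf:
  assumes d: "tree_decomp_width G T B k" and lp: "{l, p} \<in> edges T"
    and leaf: "\<And>y. {l, y} \<in> edges T \<Longrightarrow> y = p" and sub: "B l \<subseteq> B p"
  shows "tree_decomp_width G (induced T (verts T - {l})) B k"
proof -
  let ?T' = "induced T (verts T - {l})"
  have T: "is_tree T" and cover: "(\<Union>t\<in>verts T. B t) = verts G"
    and edge_bag: "\<forall>e\<in>edges G. \<exists>t\<in>verts T. e \<subseteq> B t"
    using d by (simp_all add: tree_decomp_width_def)
  have p: "p \<in> verts T - {l}"
    using T edge_subset_verts[of T] card_edge[OF _ lp] lp by (force simp: is_tree_def)
  have moved: "\<exists>t\<in>verts ?T'. X \<subseteq> B t" if "s \<in> verts T" "X \<subseteq> B s" for s X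
    using that sub p by (metis Diff_iff singletonD subset_trans verts_induced)
  have "verts G \<subseteq> (\<Union>t\<in>verts ?T'. B t)"
    using cover moved[of _ "{_}"] by blast
  then have cover': "(\<Union>t\<in>verts ?T'. B t) = verts G"
    using cover by auto
  have "connected_graph (induced ?T' {t \<in> verts ?T'. v \<in> B t})" if "v \<in> verts G" for v
  proof -
    have "connected_graph (induced T {t \<in> verts T. v \<in> B t})"
      using d that by (simp add: tree_decomp_width_def)
    then have "connected_graph (induced T ({t \<in> verts T. v \<in> B t} - {l}))"
      using leaf by (rule connected_induced_Diff_leaf)
    moreover have "{t \<in> verts ?T'. v \<in> B t} = {t \<in> verts T. v \<in> B t} - {l}"
      unfolding verts_induced by blast
    ultimately show ?thesis
      using induced_induced[of "{t \<in> verts T. v \<in> B t} - {l}" "verts T - {l}" T] by (simp add: Diff_mono)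
  qed
  moreover have "\<forall>e\<in>edges G. \<exists>t\<in>verts ?T'. e \<subseteq> B t"
    using edge_bag moved by blast
  ultimately show ?thesis
    using d cover' is_tree_remove_leaf[OF T lp leaf] unfolding tree_decomp_width_def by simp
qed

lemma leaf_bag_subset:
  assumes d: "tree_decomp_width G T B k" and l: "l \<in> verts T"
    and leaf: "\<And>y. {l, y} \<in> edges T \<Longrightarrow> y = p"
    and shared: "\<And>v. v \<in> B l \<Longrightarrow> \<exists>s\<in>verts T. s \<noteq> l \<and> v \<in> B s"
  shows "B l \<subseteq> B p"
proof
  fix v assume v: "v \<in> B l"
  then obtain s where s: "s \<in> verts T" "s \<noteq> l" "v \<in> B s"
    using shared by blast
  have "v \<in> verts G"
    using d l v by (auto simp: tree_decomp_width_def)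
  then have "connected_graph (induced T {t \<in> verts T. v \<in> B t})"
    using d by (simp add: tree_decomp_width_def)
  then have "(l, s) \<in> (adj (induced T {t \<in> verts T. v \<in> B t}))\<^sup>*"
    using l v s by (auto simp: connected_graph_iff)
  then obtain y where "(l, y) \<in> adj (induced T {t \<in> verts T. v \<in> B t})"
    using s(2) by (auto elim: converse_rtranclE)
  then show "v \<in> B p"
    using leaf by (auto simp: adj_def)
qed

lemma tree_decomp_smaller_tree:
  assumes d: "tree_decomp_width G T B k" and G: "verts G \<noteq> {}"
    and shared: "\<forall>t\<in>verts T. \<forall>v\<in>B t. \<exists>s\<in>verts T. s \<noteq> t \<and> v \<in> B s"
  obtains T' where "tree_decomp_width G T' B k" "card (verts T') < card (verts T)"
proof -
  have T: "is_tree T" and cover: "(\<Union>t\<in>verts T. B t) = verts G"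
    using d by (simp_all add: tree_decomp_width_def)
  have finT: "finite (verts T)"
    using T by (simp add: is_tree_def finite_verts)
  obtain t v where t: "t \<in> verts T" "v \<in> B t"
    using G cover by (metis UN_E all_not_in_conv)
  then obtain s where s: "s \<in> verts T" "s \<noteq> t"
    using shared by blast
  have "card {s, t} \<le> card (verts T)"
    using s t finT by (intro card_mono) auto
  then have "2 \<le> card (verts T)"
    using s by simp
  then obtain l p where l: "l \<in> verts T" and lp: "{l, p} \<in> edges T"
    and leaf: "\<And>y. {l, y} \<in> edges T \<Longrightarrow> y = p"
    using tree_has_leaf[OF T] by blast
  have "\<exists>s\<in>verts T. s \<noteq> l \<and> v \<in> B s" if "v \<in> B l" for v
    using l shared that by blast
  with d l leaf have "B l \<subseteq> B p"
    by (rule leaf_bag_subset)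
  with d lp leaf have "tree_decomp_width G (induced T (verts T - {l})) B k"
    by (rule tree_decomp_remove_leaf)
  moreover have "card (verts (induced T (verts T - {l}))) < card (verts T)"
    using l finT by (metis card_Diff1_less verts_induced)
  ultimately show thesis
    by (rule that)
qed

theorem card_edges_le_width:
  assumes "is_graph G" and "tree_decomp_width G T B k"
  shows "card (edges G) \<le> k * card (verts G)"
  using assms
proof (induction "card (verts T) + card (verts G)" arbitrary: G T B rule: less_induct)
  case less
  note G = \<open>is_graph G\<close> and d = \<open>tree_decomp_width G T B k\<close>
  consider (empty) "verts G = {}"
    | (single_bag) v t where "t \<in> verts T" "v \<in> B t" "\<forall>s\<in>verts T. v \<in> B s \<longrightarrow> s = t"
    | (shared) "verts G \<noteq> {}" "\<forall>t\<in>verts T. \<forall>v\<in>B t. \<exists>s\<in>verts T. s \<noteq> t \<and> v \<in> B s"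
    by metis
  then show ?case
  proof cases
    case empty
    then have "edges G = {}"
      using edges_subset_two_subsets[OF G] by (auto simp: two_subsets_def)
    then show ?thesis by simp
  next
    case (single_bag v t)
    let ?G' = "induced G (verts G - {v})"
    have v: "v \<in> verts G"
      using d single_bag by (auto simp: tree_decomp_width_def)
    have G': "is_graph ?G'"
      using G by (rule is_graph_induced) blast
    have d': "tree_decomp_width ?G' T (\<lambda>s. B s \<inter> (verts G - {v})) k"
      using G d by (rule tree_decomp_induced) blast
    have "card (verts ?G') < card (verts G)"
      using v finite_verts[OF G] by (metis card_Diff1_less verts_induced)
    then have IH: "card (edges ?G') \<le> k * (card (verts G) - 1)"
      using less.hyps[OF _ G' d'] v finite_verts[OF G] by simp
    have "card (edges G) \<le> card (edges ?G') + k"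
      using G d single_bag by (rule card_edges_le_delete_vertex)
    also have "\<dots> \<le> k * (card (verts G) - 1) + k"
      using IH by simp
    also have "\<dots> = k * card (verts G)"
      using v finite_verts[OF G] by (cases "card (verts G)") auto
    finally show ?thesis .
  next
    case shared
    with d obtain T' where "tree_decomp_width G T' B k" "card (verts T') < card (verts T)"
      by (rule tree_decomp_smaller_tree)
    then show ?thesis
      using less.hyps G by simp
  qed
qed

corollary card_edges_induced_le:
  assumes "is_graph G" and "treewidth_le G k" and "A \<subseteq> verts G"
  shows "card (edges (induced G A)) \<le> k * card A"
proof -
  obtain T B where "tree_decomp_width (induced G A) T B k"
    using treewidth_le_induced[OF assms] by (auto simp: treewidth_le_def)
  then show ?thesis
    using card_edges_le_width is_graph_induced[OF assms(1,3)] by fastforce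
qed

section \<open>Counting labelled graphs up to isomorphism\<close>

lemma graphs_on_eq: "graphs_on n = Pair {0..<n} ` Pow (two_subsets {0..<n})"
proof (intro set_eqI iffI)
  fix G assume G: "G \<in> graphs_on n"
  then have "G = ({0..<n}, edges G)" "edges G \<in> Pow (two_subsets {0..<n})"
    using verts_edges_eq[of G] edges_subset_two_subsets[of G] by (auto simp: graphs_on_def)
  then show "G \<in> Pair {0..<n} ` Pow (two_subsets {0..<n})"
    by (metis image_eqI)
next
  fix G assume "G \<in> Pair {0..<n} ` Pow (two_subsets {0..<n})"
  then show "G \<in> graphs_on n"
    by (fastforce simp: graphs_on_def is_graph_def two_subsets_def verts_def edges_def)
qed

lemma finite_graphs_on: "finite (graphs_on n)"
  by (simp add: graphs_on_eq finite_two_subsets)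

lemma card_graphs_on: "card (graphs_on n) = 2 ^ (n choose 2)"
proof -
  have "card (graphs_on n) = card (Pow (two_subsets {0..<n}))"
    unfolding graphs_on_eq by (rule card_image) (simp add: inj_on_def)
  then show ?thesis
    using card_Pow[OF finite_two_subsets] card_two_subsets[of "{0..<n}"] by simp
qed

lemma graph_iso_refl: "graph_iso G G"
  unfolding graph_iso_def by (intro exI[of _ id]) auto

lemma graph_iso_sym:
  assumes "graph_iso G H"
  shows "graph_iso H G"
proof -
  obtain f where f: "bij_betw f (verts G) (verts H)"
    and e: "\<forall>u\<in>verts G. \<forall>v\<in>verts G. {u, v} \<in> edges G \<longleftrightarrow> {f u, f v} \<in> edges H"
    using assms by (auto simp: graph_iso_def)
  let ?g = "inv_into (verts G) f"
  have g: "bij_betw ?g (verts H) (verts G)"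
    using f by (rule bij_betw_inv_into)
  have "{u, v} \<in> edges H \<longleftrightarrow> {?g u, ?g v} \<in> edges G" if "u \<in> verts H" "v \<in> verts H" for u v
    using e bij_betw_apply[OF g] bij_betw_inv_into_right[OF f] that by metis
  then show ?thesis
    using g unfolding graph_iso_def by blast
qed

lemma graph_iso_trans:
  assumes "graph_iso G H" and "graph_iso H K"
  shows "graph_iso G K"
proof -
  obtain f where f: "bij_betw f (verts G) (verts H)"
    and e: "\<forall>u\<in>verts G. \<forall>v\<in>verts G. {u, v} \<in> edges G \<longleftrightarrow> {f u, f v} \<in> edges H"
    using assms(1) by (auto simp: graph_iso_def)
  obtain g where g: "bij_betw g (verts H) (verts K)"
    and e': "\<forall>u\<in>verts H. \<forall>v\<in>verts H. {u, v} \<in> edges H \<longleftrightarrow> {g u, g v} \<in> edges K"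
    using assms(2) by (auto simp: graph_iso_def)
  have "{u, v} \<in> edges G \<longleftrightarrow> {(g \<circ> f) u, (g \<circ> f) v} \<in> edges K" if "u \<in> verts G" "v \<in> verts G" for u v
    using e e' bij_betw_apply[OF f] that by simp
  then show ?thesis
    using bij_betw_trans[OF f g] unfolding graph_iso_def by blast
qed

lemma equiv_iso_rel: "equiv (graphs_on n) (iso_rel n)"
  by (rule equivI)
    (auto simp: iso_rel_def refl_on_def sym_def trans_def
      intro: graph_iso_refl graph_iso_sym graph_iso_trans)

lemma edges_eq_image_iso:
  assumes G: "is_graph G" and H: "is_graph H" and f: "bij_betw f (verts G) (verts H)"
    and e: "\<forall>u\<in>verts G. \<forall>v\<in>verts G. {u, v} \<in> edges G \<longleftrightarrow> {f u, f v} \<in> edges H"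
  shows "edges H = (`) f ` edges G"
proof (intro equalityI subsetI)
  fix e' assume e': "e' \<in> edges H"
  then obtain a b where ab: "e' = {a, b}"
    using card_edge[OF H] by (meson card_2_iff)
  then have "a \<in> f ` verts G" "b \<in> f ` verts G"
    using edge_subset_verts[OF H e'] bij_betw_imp_surj_on[OF f] by auto
  then obtain u w where "u \<in> verts G" "w \<in> verts G" "a = f u" "b = f w"
    by blast
  then show "e' \<in> (`) f ` edges G"
    using e e' ab by (auto intro!: image_eqI[where x = "{u, w}"])
next
  fix e' assume "e' \<in> (`) f ` edges G"
  then obtain e where e': "e \<in> edges G" "e' = f ` e"
    by blast
  then obtain u w where "e = {u, w}"
    using card_edge[OF G] by (meson card_2_iff)
  with e' have "{u, w} \<in> edges G" "e' = {f u, f w}"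
    by auto
  then show "e' \<in> edges H"
    using e edge_subset_verts[OF G] by auto
qed

definition relabel :: "(nat \<Rightarrow> nat) \<Rightarrow> graph \<Rightarrow> graph" where
  "relabel p G = (verts G, (`) p ` edges G)"

lemma iso_class_subset_relabel:
  assumes G: "G \<in> graphs_on n"
  shows "iso_rel n `` {G} \<subseteq> (\<lambda>p. relabel p G) ` {p. p permutes {0..<n}}"
proof
  fix H assume "H \<in> iso_rel n `` {G}"
  then have H: "H \<in> graphs_on n" and "graph_iso G H"
    by (auto simp: iso_rel_def)
  then obtain f where f: "bij_betw f {0..<n} {0..<n}"
    and e: "\<forall>u\<in>verts G. \<forall>v\<in>verts G. {u, v} \<in> edges G \<longleftrightarrow> {f u, f v} \<in> edges H"
    using G by (auto simp: graph_iso_def graphs_on_def)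
  define p where "p x = (if x \<in> {0..<n} then f x else x)" for x
  have p: "p permutes {0..<n}"
    using bij_betw_cong[of "{0..<n}" p f] f by (intro bij_imp_permutes) (auto simp: p_def)
  have "edges H = (`) f ` edges G"
    using G H f e by (intro edges_eq_image_iso) (auto simp: graphs_on_def)
  also have "\<dots> = (`) p ` edges G"
  proof (rule image_cong)
    fix e assume "e \<in> edges G"
    then have "e \<subseteq> {0..<n}"
      using G edge_subset_verts[of G e] by (simp add: graphs_on_def)
    then show "f ` e = p ` e"
      by (auto simp: p_def)
  qed simp
  finally have "H = relabel p G"
    using G H verts_edges_eq[of H] by (auto simp: relabel_def graphs_on_def)
  then show "H \<in> (\<lambda>p. relabel p G) ` {p. p permutes {0..<n}}"
    using p by blast
qed

lemma card_iso_class_le: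
  assumes "G \<in> graphs_on n"
  shows "card (iso_rel n `` {G}) \<le> fact n"
proof -
  have fin: "finite {p. p permutes {0..<n}}"
    by (simp add: finite_permutations)
  have "card (iso_rel n `` {G}) \<le> card ((\<lambda>p. relabel p G) ` {p. p permutes {0..<n}})"
    using iso_class_subset_relabel[OF assms] fin by (intro card_mono) auto
  also have "\<dots> \<le> card {p. p permutes {0..<n}}"
    using fin by (rule card_image_le)
  finally show ?thesis
    by (simp add: card_permutations)
qed

lemma card_iso_classes_ge: "2 ^ (n choose 2) \<le> fact n * card (iso_classes n)"
proof -
  have "2 ^ (n choose 2) = card (\<Union>(iso_classes n))"
    using card_graphs_on Union_quotient[OF equiv_iso_rel] by (simp add: iso_classes_def)
  also have "\<dots> \<le> (\<Sum>C\<in>iso_classes n. card C)"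
    by (rule card_Union_le_sum_card)
  also have "\<dots> \<le> (\<Sum>C\<in>iso_classes n. fact n)"
  proof (rule sum_mono)
    fix C assume "C \<in> iso_classes n"
    then obtain G where "G \<in> graphs_on n" "C = iso_rel n `` {G}"
      unfolding iso_classes_def by (auto elim: quotientE)
    then show "card C \<le> fact n"
      using card_iso_class_le by simp
  qed
  finally show ?thesis by (simp add: mult.commute)
qed

section \<open>Graphs with a sparse vertex set and the values of the polynomial\<close>

lemma card_subsets_card_le:
  assumes X: "finite X"
  shows "card {F. F \<subseteq> X \<and> card F \<le> K} \<le> (card X + 1) ^ K"
proof -
  let ?Y = "insert None (Some ` X)"
  let ?L = "{xs. set xs \<subseteq> ?Y \<and> length xs = K}"
  \<comment> \<open>A set of at most K elements is read off a length-K word over X padded with None.\<close>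
  let ?set_of = "\<lambda>xs. {x. Some x \<in> set xs}"
  have Y: "finite ?Y" "card ?Y = card X + 1"
    using X by (simp_all add: card_image)
  have "{F. F \<subseteq> X \<and> card F \<le> K} \<subseteq> ?set_of ` ?L"
  proof
    fix F assume F: "F \<in> {F. F \<subseteq> X \<and> card F \<le> K}"
    then obtain xs where xs: "set xs = F" "distinct xs"
      using X finite_distinct_list[of F] finite_subset by blast
    let ?ys = "map Some xs @ replicate (K - length xs) None"
    have "length ?ys = K"
      using F xs distinct_card[OF xs(2)] by simp
    moreover have "set ?ys \<subseteq> ?Y" "?set_of ?ys = F"
      using xs F by auto
    ultimately show "F \<in> ?set_of ` ?L" by blast
  qed
  then have "card {F. F \<subseteq> X \<and> card F \<le> K} \<le> card (?set_of ` ?L)"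
    using Y by (intro card_mono) (auto intro: finite_lists_length_eq)
  also have "\<dots> \<le> card ?L"
    using Y by (intro card_image_le finite_lists_length_eq)
  also have "\<dots> = (card X + 1) ^ K"
    using card_lists_length_eq[OF Y(1)] Y(2) by simp
  finally show ?thesis .
qed

definition sparse_set_graphs :: "nat \<Rightarrow> nat \<Rightarrow> nat \<Rightarrow> graph set" where
  "sparse_set_graphs n m k = {G \<in> graphs_on n.
     \<exists>A. A \<subseteq> {0..<n} \<and> card A = m \<and> card (edges (induced G A)) \<le> k * m}"

lemma card_graphs_on_fixed_induced_edges:
  assumes A: "A \<subseteq> {0..<n}"
  shows "card {G \<in> graphs_on n. edges (induced G A) = F} \<le> 2 ^ ((n choose 2) - (card A choose 2))"
proof -
  let ?V = "{0..<n}"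
  let ?rest = "Pow (two_subsets ?V - two_subsets A)"
  have fin: "finite (two_subsets ?V)"
    by (simp add: finite_two_subsets)
  have "{G \<in> graphs_on n. edges (induced G A) = F} \<subseteq> (\<lambda>E. (?V, F \<union> E)) ` ?rest"
  proof
    fix G assume "G \<in> {G \<in> graphs_on n. edges (induced G A) = F}"
    then have G: "is_graph G" "verts G = ?V" and F: "{e \<in> edges G. e \<subseteq> A} = F"
      by (auto simp: graphs_on_def)
    have "edges G \<subseteq> two_subsets ?V"
      using edges_subset_two_subsets[OF G(1)] G(2) by simp
    then have "edges G = F \<union> (edges G - two_subsets A)" "edges G - two_subsets A \<in> ?rest"
      using F by (auto simp: two_subsets_def)
    then show "G \<in> (\<lambda>E. (?V, F \<union> E)) ` ?rest"
      using verts_edges_eq[of G] G(2) by (metis image_eqI)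
  qed
  then have "card {G \<in> graphs_on n. edges (induced G A) = F} \<le> card ?rest"
    using fin by (meson card_image_le card_mono finite_Diff finite_Pow_iff finite_imageI le_trans)
  also have "\<dots> = 2 ^ (card (two_subsets ?V) - card (two_subsets A))"
    using fin two_subsets_mono[OF A] by (simp add: card_Pow card_Diff_subset finite_subset)
  also have "\<dots> = 2 ^ ((n choose 2) - (card A choose 2))"
    using A by (simp add: card_two_subsets finite_subset)
  finally show ?thesis .
qed

lemma card_graphs_on_sparse_set_le:
  assumes A: "A \<subseteq> {0..<n}"
  shows "card {G \<in> graphs_on n. card (edges (induced G A)) \<le> K}
    \<le> ((card A choose 2) + 1) ^ K * 2 ^ ((n choose 2) - (card A choose 2))"
proof -
  let ?SF = "{F. F \<subseteq> two_subsets A \<and> card F \<le> K}"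
  let ?W = "\<lambda>F. {G \<in> graphs_on n. edges (induced G A) = F}"
  let ?c = "2 ^ ((n choose 2) - (card A choose 2))"
  have "finite A"
    using A finite_subset by blast
  then have finSF: "finite ?SF"
    using finite_two_subsets by (auto intro: rev_finite_subset[of "Pow (two_subsets A)"])
  have "{G \<in> graphs_on n. card (edges (induced G A)) \<le> K} \<subseteq> (\<Union>F\<in>?SF. ?W F)"
    by (auto simp: graphs_on_def is_graph_def two_subsets_def)
  then have "card {G \<in> graphs_on n. card (edges (induced G A)) \<le> K} \<le> card (\<Union>F\<in>?SF. ?W F)"
    using finSF finite_graphs_on by (intro card_mono) auto
  also have "\<dots> \<le> (\<Sum>F\<in>?SF. card (?W F))"
    by (rule card_UN_le[OF finSF])
  also have "\<dots> \<le> (\<Sum>F\<in>?SF. ?c)"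
    using card_graphs_on_fixed_induced_edges[OF A] by (intro sum_mono) auto
  also have "\<dots> = card ?SF * ?c"
    by simp
  also have "\<dots> \<le> ((card A choose 2) + 1) ^ K * ?c"
    using card_subsets_card_le[OF finite_two_subsets[OF \<open>finite A\<close>], of K]
      card_two_subsets[OF \<open>finite A\<close>] by simp
  finally show ?thesis .
qed

lemma card_sparse_set_graphs:
  "card (sparse_set_graphs n m k)
     \<le> (n choose m) * ((m choose 2) + 1) ^ (k * m) * 2 ^ ((n choose 2) - (m choose 2))"
proof -
  let ?M = "{A. A \<subseteq> {0..<n} \<and> card A = m}"
  let ?S = "\<lambda>A. {G \<in> graphs_on n. card (edges (induced G A)) \<le> k * m}"
  have "sparse_set_graphs n m k = (\<Union>A\<in>?M. ?S A)"
    by (auto simp: sparse_set_graphs_def)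
  also have "card \<dots> \<le> (\<Sum>A\<in>?M. card (?S A))"
    by (rule card_UN_le) simp
  also have "\<dots> \<le> (\<Sum>A\<in>?M. ((m choose 2) + 1) ^ (k * m) * 2 ^ ((n choose 2) - (m choose 2)))"
    using card_graphs_on_sparse_set_le by (intro sum_mono) fastforce
  also have "\<dots> = (n choose m) * (((m choose 2) + 1) ^ (k * m) * 2 ^ ((n choose 2) - (m choose 2)))"
    using n_subsets[of "{0..<n}" m] by simp
  finally show ?thesis
    by (simp add: mult.assoc)
qed

definition bounded_polys :: "nat \<Rightarrow> nat \<Rightarrow> nat poly set" where
  "bounded_polys c m = {p. \<forall>j. coeff p j \<le> c \<and> (m \<le> j \<longrightarrow> coeff p j = 0)}"

lemma bounded_polys_coeffs:
  "inj_on (\<lambda>p. restrict (coeff p) {0..<m}) (bounded_polys c m)"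
  "(\<lambda>p. restrict (coeff p) {0..<m}) ` bounded_polys c m \<subseteq> {0..<m} \<rightarrow>\<^sub>E {0..c}"
proof -
  show "inj_on (\<lambda>p. restrict (coeff p) {0..<m}) (bounded_polys c m)"
  proof (rule inj_onI)
    fix p q
    assume "p \<in> bounded_polys c m" "q \<in> bounded_polys c m"
      and "restrict (coeff p) {0..<m} = restrict (coeff q) {0..<m}"
    then have "coeff p j = coeff q j" for j
      by (cases "j < m") (auto simp: bounded_polys_def dest: fun_cong[of _ _ j])
    then show "p = q"
      by (rule poly_eqI)
  qed
  show "(\<lambda>p. restrict (coeff p) {0..<m}) ` bounded_polys c m \<subseteq> {0..<m} \<rightarrow>\<^sub>E {0..c}"
    by (auto simp: bounded_polys_def)
qed

lemma finite_bounded_polys: "finite (bounded_polys c m)"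
proof -
  have "finite ((\<lambda>p. restrict (coeff p) {0..<m}) ` bounded_polys c m)"
    using bounded_polys_coeffs(2) by (rule finite_subset) (simp add: finite_PiE)
  then show ?thesis
    using bounded_polys_coeffs(1) by (rule finite_imageD)
qed

lemma card_bounded_polys: "card (bounded_polys c m) \<le> (c + 1) ^ m"
proof -
  have "finite ({0..<m} \<rightarrow>\<^sub>E {0..c})"
    by (simp add: finite_PiE)
  with bounded_polys_coeffs have "card (bounded_polys c m) \<le> card ({0..<m} \<rightarrow>\<^sub>E {0..c})"
    by (rule card_inj_on_le)
  then show ?thesis
    by (simp add: card_PiE)
qed

lemma coeff_P_class:
  assumes "is_graph G"
  shows "coeff (P_class Q G) j = card {A. A \<subseteq> verts G \<and> induced G A \<in> Q \<and> card A = j}"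
proof -
  let ?S = "{A. A \<subseteq> verts G \<and> induced G A \<in> Q}"
  have "finite ?S"
    using finite_verts[OF assms] by simp
  have "coeff (P_class Q G) j = (\<Sum>A\<in>?S. coeff (monom 1 (card A)) j)"
    unfolding P_class_def by (rule coeff_sum)
  also have "\<dots> = (\<Sum>A\<in>?S. if card A = j then 1 else 0)"
    by (rule sum.cong) (auto simp: coeff_monom)
  also have "\<dots> = card {A \<in> ?S. card A = j}"
    using \<open>finite ?S\<close> by (simp add: sum.If_cases Int_def)
  finally show ?thesis
    by (simp add: conj_assoc)
qed

lemma P_class_in_bounded_polys:
  assumes Q: "Q \<subseteq> {G. is_graph G}" "\<forall>G\<in>Q. treewidth_le G k"
    and G: "G \<in> graphs_on n - sparse_set_graphs n m k"
  shows "P_class Q G \<in> bounded_polys (2 ^ n) m"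
  unfolding bounded_polys_def
proof (intro CollectI allI conjI impI)
  have G': "is_graph G" "verts G = {0..<n}"
    using G by (auto simp: graphs_on_def)
  fix j
  have "card {A. A \<subseteq> verts G \<and> induced G A \<in> Q \<and> card A = j} \<le> card (Pow {0..<n})"
    using G' by (intro card_mono) auto
  then show "coeff (P_class Q G) j \<le> 2 ^ n"
    using coeff_P_class[OF G'(1)] by (simp add: card_Pow)
  \<comment> \<open>An m-subset of a member of Q spans at most km edges, which G forbids.\<close>
  assume "m \<le> j"
  have "{A. A \<subseteq> verts G \<and> induced G A \<in> Q \<and> card A = j} = {}"
  proof (intro equals0I)
    fix A
    assume "A \<in> {A. A \<subseteq> verts G \<and> induced G A \<in> Q \<and> card A = j}"
    then have A: "A \<subseteq> {0..<n}" "induced G A \<in> Q" "m \<le> card A"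
      using G'(2) \<open>m \<le> j\<close> by auto
    then obtain A' where A': "A' \<subseteq> A" "card A' = m"
      by (meson obtain_subset_with_card_n)
    have "is_graph (induced G A)" "treewidth_le (induced G A) k"
      using A(2) Q by auto
    then have "card (edges (induced (induced G A) A')) \<le> k * m"
      using card_edges_induced_le A' by fastforce
    then have "card (edges (induced G A')) \<le> k * m"
      using induced_induced[OF A'(1)] by simp
    then have "G \<in> sparse_set_graphs n m k"
      using G A(1) A' unfolding sparse_set_graphs_def by blast
    then show False
      using G by simp
  qed
  then show "coeff (P_class Q G) j = 0"
    unfolding coeff_P_class[OF G'(1)] by (simp only: card.empty)
qed

lemma iso_class_eq_if_P_unique:
  assumes G: "G \<in> graphs_on n" and H: "H \<in> graphs_on n"
    and uniq: "P_unique P G" and eq: "P H = P G"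
  shows "iso_rel n `` {H} = iso_rel n `` {G}"
proof -
  have "graph_iso G H"
    using uniq eq H unfolding P_unique_def graphs_on_def by blast
  then have "(G, H) \<in> iso_rel n"
    using G H by (simp add: iso_rel_def)
  then show ?thesis
    using equiv_class_eq[OF equiv_iso_rel] by simp
qed

lemma card_unique_classes_le:
  assumes S: "S \<subseteq> graphs_on n"
  shows "card (unique_classes P n) \<le> card S + card (P ` (graphs_on n - S))"
proof -
  define cls where "cls G = iso_rel n `` {G}" for G
  define rep where "rep x = (SOME G. G \<in> graphs_on n - S \<and> P G = x)" for x
  \<comment> \<open>A P-unique class is recovered from the value of P on any of its members.\<close>
  have "unique_classes P n \<subseteq> cls ` S \<union> (cls \<circ> rep) ` P ` (graphs_on n - S)"
  proof
    fix C assume C: "C \<in> unique_classes P n"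
    then obtain G where G: "G \<in> graphs_on n" "C = cls G"
      by (auto simp: unique_classes_def iso_classes_def cls_def elim: quotientE)
    then have uniq: "P_unique P G"
      using C equiv_class_self[OF equiv_iso_rel] by (auto simp: unique_classes_def cls_def)
    show "C \<in> cls ` S \<union> (cls \<circ> rep) ` P ` (graphs_on n - S)"
    proof (cases "G \<in> S")
      case True
      then show ?thesis using G by blast
    next
      case False
      then have "rep (P G) \<in> graphs_on n \<and> P (rep (P G)) = P G"
        using someI[of "\<lambda>H. H \<in> graphs_on n - S \<and> P H = P G" G] G unfolding rep_def by auto
      then have "C = (cls \<circ> rep) (P G)"
        using iso_class_eq_if_P_unique[OF G(1) _ uniq] G(2) by (simp add: cls_def)
      then show ?thesis
        using G False by blast
    qed
  qed
  moreover have "finite S"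
    using S finite_graphs_on by (rule finite_subset)
  ultimately have "card (unique_classes P n) \<le> card (cls ` S \<union> (cls \<circ> rep) ` P ` (graphs_on n - S))"
    using finite_graphs_on by (intro card_mono) auto
  also have "\<dots> \<le> card (cls ` S) + card ((cls \<circ> rep) ` P ` (graphs_on n - S))"
    by (rule card_Un_le)
  also have "\<dots> \<le> card S + card (P ` (graphs_on n - S))"
    using \<open>finite S\<close> finite_graphs_on by (intro add_mono card_image_le) auto
  finally show ?thesis .
qed

lemma unique_classes_fraction_le:
  assumes Q: "Q \<subseteq> {G. is_graph G}" "\<forall>G\<in>Q. treewidth_le G k"
  shows "real (card (unique_classes (P_class Q) n)) / real (card (iso_classes n))
    \<le> fact n * real (card (sparse_set_graphs n m k)) / 2 ^ (n choose 2)
      + fact n * real (card (bounded_polys (2 ^ n) m)) / 2 ^ (n choose 2)"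
proof -
  let ?U = "card (unique_classes (P_class Q) n)"
  let ?b = "real (card (sparse_set_graphs n m k)) + real (card (bounded_polys (2 ^ n) m))"
  have "sparse_set_graphs n m k \<subseteq> graphs_on n"
    by (auto simp: sparse_set_graphs_def)
  then have "?U \<le> card (sparse_set_graphs n m k) + card (P_class Q ` (graphs_on n - sparse_set_graphs n m k))"
    by (rule card_unique_classes_le)
  also have "\<dots> \<le> card (sparse_set_graphs n m k) + card (bounded_polys (2 ^ n) m)"
    using P_class_in_bounded_polys[OF Q] finite_bounded_polys by (intro add_left_mono card_mono) auto
  finally have U: "real ?U \<le> ?b"
    by (metis of_nat_add of_nat_mono)
  have "real (2 ^ (n choose 2)) \<le> real (fact n * card (iso_classes n))"
    using card_iso_classes_ge by (rule of_nat_mono)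
  then have classes: "2 ^ (n choose 2) \<le> fact n * real (card (iso_classes n))"
    by simp
  have "(0::real) < 2 ^ (n choose 2)"
    by simp
  then have pos: "0 < fact n * real (card (iso_classes n))"
    using classes by linarith
  have "real ?U / real (card (iso_classes n)) \<le> ?b / real (card (iso_classes n))"
    using U by (rule divide_right_mono) simp
  also have "\<dots> = fact n * ?b / (fact n * real (card (iso_classes n)))"
    by (rule mult_divide_mult_cancel_left[symmetric]) simp
  also have "\<dots> \<le> fact n * ?b / 2 ^ (n choose 2)"
    using classes mult_pos_pos[OF pos] by (intro divide_left_mono) auto
  finally show ?thesis
    by (simp add: add_divide_distrib distrib_left)
qed

section \<open>Asymptotics\<close>

lemma real_choose_two: "real (n choose 2) = real n * (real n - 1) / 2"
proof -
  have "2 dvd n * (n - 1)"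
    by (cases "even n") auto
  then have "real (n choose 2) = real (n * (n - 1)) / 2"
    by (simp add: choose_two real_of_nat_div)
  also have "real (n * (n - 1)) = real n * (real n - 1)"
    by (cases n) (simp_all add: algebra_simps)
  finally show ?thesis .
qed

lemma fact_le_powr: "0 < n \<Longrightarrow> fact n \<le> real n powr real n"
  using fact_le_power[of n, where 'a = real] by (simp add: powr_realpow)

lemma choose_two_quarter_lower:
  assumes "7 \<le> n"
  shows "(real n - 3) * (real n - 7) / 32 \<le> real ((n div 4) choose 2)"
proof -
  define M where "M = real (n div 4)"
  have "real n \<le> 4 * M + 3"
    unfolding M_def by linarith
  then have "(real n - 3) / 4 * ((real n - 7) / 4) \<le> M * (M - 1)"
    using assms by (intro mult_mono) auto
  then show ?thesis
    by (simp add: real_choose_two M_def)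
qed

lemma choose_two_quarter_power_le:
  assumes n: "2 \<le> n"
  shows "real ((((n div 4) choose 2) + 1) ^ (k * (n div 4))) \<le> real n powr (2 * real k * real n)"
proof -
  define m where "m = n div 4"
  have "m choose 2 \<le> m * m"
    unfolding choose_two by (meson diff_le_self div_le_dividend le_trans mult_le_mono2)
  moreover have "(4 * m) * (4 * m) \<le> n * n" "2 * 2 \<le> n * n"
    using n by (intro mult_le_mono; simp add: m_def)+
  then have "16 * (m * m) \<le> n * n" "4 \<le> n * n"
    by simp_all
  moreover have "c \<le> q \<Longrightarrow> 16 * q \<le> p \<Longrightarrow> 4 \<le> p \<Longrightarrow> c + 1 \<le> p" for c q p :: nat
    by linarith
  ultimately have "(m choose 2) + 1 \<le> n * n"
    by blast
  then have "((m choose 2) + 1) ^ (k * m) \<le> (n * n) ^ (k * m)"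
    by (rule power_mono) simp
  also have "\<dots> \<le> (n * n) ^ (k * n)"
    using n by (intro power_increasing) (auto simp: m_def)
  finally have "real (((m choose 2) + 1) ^ (k * m)) \<le> real ((n * n) ^ (k * n))"
    by (rule of_nat_mono)
  also have "\<dots> = real n ^ (2 * k * n)"
    by (metis of_nat_power power2_eq_square power_mult mult.assoc)
  also have "\<dots> = real n powr (2 * real k * real n)"
    using n powr_realpow[of "real n" "2 * k * n"] by simp
  finally show ?thesis
    by (simp add: m_def)
qed

lemma sparse_set_graphs_fraction_le:
  assumes n: "8 \<le> n"
  shows "fact n * real (card (sparse_set_graphs n (n div 4) k)) / 2 ^ (n choose 2)
    \<le> real n powr real n * 2 powr real n * real n powr (2 * real k * real n)
      / 2 powr ((real n - 3) * (real n - 7) / 32)"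
proof -
  define m where "m = n div 4"
  define X where "X = real (((m choose 2) + 1) ^ (k * m))"
  have "m choose 2 \<le> n choose 2"
    by (rule binomial_right_mono) (simp add: m_def)
  then have "(2::real) ^ ((n choose 2) - (m choose 2)) = 2 ^ (n choose 2) / 2 ^ (m choose 2)"
    by (simp add: power_diff)
  moreover have "real (card (sparse_set_graphs n m k))
      \<le> real ((n choose m) * ((m choose 2) + 1) ^ (k * m) * 2 ^ ((n choose 2) - (m choose 2)))"
    by (rule of_nat_mono[OF card_sparse_set_graphs])
  ultimately have "real (card (sparse_set_graphs n m k))
      \<le> real (n choose m) * X * 2 ^ (n choose 2) / 2 ^ (m choose 2)"
    by (simp add: X_def)
  then have "fact n * real (card (sparse_set_graphs n m k)) / 2 ^ (n choose 2)
      \<le> fact n * real (n choose m) * X / 2 ^ (m choose 2)"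
    by (simp add: field_simps)
  also have "\<dots> \<le> real n powr real n * 2 powr real n * real n powr (2 * real k * real n)
      / 2 powr ((real n - 3) * (real n - 7) / 32)"
  proof (intro frac_le mult_mono)
    show "fact n \<le> real n powr real n"
      using n by (intro fact_le_powr) simp
    show "real (n choose m) \<le> 2 powr real n"
      using of_nat_mono[where 'a = real, OF binomial_le_pow2[of n m]] by (simp add: powr_realpow)
    show "X \<le> real n powr (2 * real k * real n)"
      using n choose_two_quarter_power_le[of n k] by (simp add: X_def m_def)
    show "2 powr ((real n - 3) * (real n - 7) / 32) \<le> 2 ^ (m choose 2)"
      using n choose_two_quarter_lower[of n] by (simp add: m_def powr_realpow[symmetric])
  qed (auto simp: X_def)
  finally show ?thesis
    by (simp add: m_def)
qed

lemma bounded_polys_fraction_le: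
  assumes n: "8 \<le> n"
  shows "fact n * real (card (bounded_polys (2 ^ n) (n div 4))) / 2 ^ (n choose 2)
    \<le> real n powr real n * 2 powr ((real n + 1) * real n / 4) / 2 powr (real n * (real n - 1) / 2)"
proof -
  define m where "m = n div 4"
  have "card (bounded_polys (2 ^ n) m) \<le> (2 ^ n + 1) ^ m"
    by (rule card_bounded_polys)
  also have "\<dots> \<le> (2 ^ (n + 1)) ^ m"
    by (intro power_mono) simp_all
  finally have "real (card (bounded_polys (2 ^ n) m)) \<le> 2 ^ ((n + 1) * m)"
    by (metis of_nat_mono of_nat_numeral of_nat_power power_mult)
  also have "\<dots> = 2 powr real ((n + 1) * m)"
    by (rule powr_realpow[symmetric]) simp
  also have "\<dots> \<le> 2 powr ((real n + 1) * real n / 4)"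
  proof (intro powr_mono)
    have "real ((n + 1) * m) * 4 = (real n + 1) * real (4 * m)"
      by (simp add: algebra_simps)
    also have "\<dots> \<le> (real n + 1) * real n"
      by (intro mult_left_mono) (simp_all add: m_def)
    finally have "real ((n + 1) * m) * 4 \<le> (real n + 1) * real n" .
    then show "real ((n + 1) * m) \<le> (real n + 1) * real n / 4"
      by simp
  qed simp
  finally have polys: "real (card (bounded_polys (2 ^ n) m)) \<le> 2 powr ((real n + 1) * real n / 4)" .
  have "(2::real) ^ (n choose 2) = 2 powr (real n * (real n - 1) / 2)"
    by (simp add: powr_realpow[symmetric] real_choose_two)
  moreover have "fact n * real (card (bounded_polys (2 ^ n) m))
      \<le> real n powr real n * 2 powr ((real n + 1) * real n / 4)"
    using n polys by (intro mult_mono fact_le_powr) auto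
  ultimately show ?thesis
    by (simp add: m_def divide_right_mono)
qed

lemma sparse_set_graphs_negligible:
  "(\<lambda>n. fact n * real (card (sparse_set_graphs n (n div 4) k)) / 2 ^ (n choose 2)) \<longlonglongrightarrow> 0"
proof (rule tendsto_sandwich[OF _ _ tendsto_const])
  let ?h = "\<lambda>n. real n powr real n * 2 powr real n * real n powr (2 * real k * real n)
      / 2 powr ((real n - 3) * (real n - 7) / 32)"
  show "\<forall>\<^sub>F n in sequentially. 0 \<le> fact n * real (card (sparse_set_graphs n (n div 4) k)) / 2 ^ (n choose 2)"
    by simp
  show "\<forall>\<^sub>F n in sequentially.
      fact n * real (card (sparse_set_graphs n (n div 4) k)) / 2 ^ (n choose 2) \<le> ?h n"
    using eventually_ge_at_top[of 8] by eventually_elim (rule sparse_set_graphs_fraction_le)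
  show "?h \<longlonglongrightarrow> 0"
    by real_asymp
qed

lemma bounded_polys_negligible:
  "(\<lambda>n. fact n * real (card (bounded_polys (2 ^ n) (n div 4))) / 2 ^ (n choose 2)) \<longlonglongrightarrow> 0"
proof (rule tendsto_sandwich[OF _ _ tendsto_const])
  let ?h = "\<lambda>n. real n powr real n * 2 powr ((real n + 1) * real n / 4) / 2 powr (real n * (real n - 1) / 2)"
  show "\<forall>\<^sub>F n in sequentially. 0 \<le> fact n * real (card (bounded_polys (2 ^ n) (n div 4))) / 2 ^ (n choose 2)"
    by simp
  show "\<forall>\<^sub>F n in sequentially.
      fact n * real (card (bounded_polys (2 ^ n) (n div 4))) / 2 ^ (n choose 2) \<le> ?h n"
    using eventually_ge_at_top[of 8] by eventually_elim (rule bounded_polys_fraction_le)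
  show "?h \<longlonglongrightarrow> 0"
    by real_asymp
qed

theorem corollary2:
  fixes k :: nat and Q :: "graph set"
  assumes "Q \<subseteq> {G. is_graph G}"
    and "iso_closed Q"
    and "\<forall>G\<in>Q. treewidth_le G k"
  shows "weakly_distinguishing (P_class Q)"
  unfolding weakly_distinguishing_def
proof (rule tendsto_sandwich[OF _ _ tendsto_const])
  show "\<forall>\<^sub>F n in sequentially. 0 \<le> real (card (unique_classes (P_class Q) n)) / real (card (iso_classes n))"
    by simp
  show "\<forall>\<^sub>F n in sequentially. real (card (unique_classes (P_class Q) n)) / real (card (iso_classes n))
      \<le> fact n * real (card (sparse_set_graphs n (n div 4) k)) / 2 ^ (n choose 2)
        + fact n * real (card (bounded_polys (2 ^ n) (n div 4))) / 2 ^ (n choose 2)"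
    using unique_classes_fraction_le[OF assms(1,3)] by simp
  show "(\<lambda>n. fact n * real (card (sparse_set_graphs n (n div 4) k)) / 2 ^ (n choose 2)
      + fact n * real (card (bounded_polys (2 ^ n) (n div 4))) / 2 ^ (n choose 2)) \<longlonglongrightarrow> 0"
    using tendsto_add[OF sparse_set_graphs_negligible bounded_polys_negligible] by simp
qed

end
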